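(* Let $G=(V,E)$ be a connected simple undirected graph and $c\in\mathbb{R}^n$ a vector with strictly positive components satisfying $\sum_{j\in S}c_j^2=\sum_{j\in N(S)}c_j^2$ for every $S\in\mathcal{S}_1$. Let $\mathcal{F}$ be the family of sets $S\in\mathcal{S}_2$ such that (a) there is no partition $S=S'\cup S''$ of $S$ into two nonempty disjoint sets with $N(S')\cap N(S'')=\emptyset$, and (b) there is no stable set $S'$ with $S\subsetneq S'$ and $N(S')=N(S)$. Then $\sum_{j\in S}c_j^2<\sum_{j\in N(S)}c_j^2$ holds for every $S\in\mathcal{S}_2$ if and only if it holds for every $S\in\mathcal{F}$.
   Context: For $S\subseteq V$, $N(S)=\{j\in V\setminus S:\ \exists\, i\in S \text{ with } \{i,j\}\in E\}$. A set $S\subseteq V$ is stable if no two elements of $S$ are joined by an edge. $\mathcal{S}_1$ is the family of nonempty stable sets $S\subseteq V$ such that there is no edge $\{k,\ell\}\in E$ with $k\notin S$ and $\ell\notin S$; $\mathcal{S}_2$ is the family of nonempty stable sets $S\subseteq V$ such that there exists an edge $\{k,\ell\}\in E$ with $k\notin S$ and $\ell\notin S$. *)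

theory Defs
  imports Complex_Main
begin

definition simple_graph :: "'a set \<Rightarrow> 'a set set \<Rightarrow> bool" where
  "simple_graph V E \<longleftrightarrow> finite V \<and> (\<forall>e\<in>E. e \<subseteq> V \<and> card e = 2)"

definition adj_rel :: "'a set set \<Rightarrow> ('a \<times> 'a) set" where
  "adj_rel E = {(i, j). {i, j} \<in> E}"

definition connected_graph :: "'a set \<Rightarrow> 'a set set \<Rightarrow> bool" where
  "connected_graph V E \<longleftrightarrow> (\<forall>i\<in>V. \<forall>j\<in>V. (i, j) \<in> (adj_rel E)\<^sup>*)"

definition nbhd :: "'a set \<Rightarrow> 'a set set \<Rightarrow> 'a set \<Rightarrow> 'a set" where
  "nbhd V E S = {j \<in> V - S. \<exists>i\<in>S. {i, j} \<in> E}"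

definition stable :: "'a set \<Rightarrow> 'a set set \<Rightarrow> 'a set \<Rightarrow> bool" where
  "stable V E S \<longleftrightarrow> S \<subseteq> V \<and> (\<forall>i\<in>S. \<forall>j\<in>S. {i, j} \<notin> E)"

definition S1 :: "'a set \<Rightarrow> 'a set set \<Rightarrow> 'a set set" where
  "S1 V E = {S. S \<noteq> {} \<and> stable V E S \<and> \<not> (\<exists>k l. {k, l} \<in> E \<and> k \<notin> S \<and> l \<notin> S)}"

definition S2 :: "'a set \<Rightarrow> 'a set set \<Rightarrow> 'a set set" where
  "S2 V E = {S. S \<noteq> {} \<and> stable V E S \<and> (\<exists>k l. {k, l} \<in> E \<and> k \<notin> S \<and> l \<notin> S)}"

definition F_family :: "'a set \<Rightarrow> 'a set set \<Rightarrow> 'a set set" where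
  "F_family V E = {S \<in> S2 V E.
     \<not> (\<exists>S' S''. S' \<noteq> {} \<and> S'' \<noteq> {} \<and> S' \<inter> S'' = {} \<and> S' \<union> S'' = S
            \<and> nbhd V E S' \<inter> nbhd V E S'' = {})
   \<and> \<not> (\<exists>S'. stable V E S' \<and> S \<subset> S' \<and> nbhd V E S' = nbhd V E S)}"

end

theory Submission
  imports Defs
begin

text \<open>A deficient \<open>S \<in> \<S>\<^sub>2\<close> is turned into a deficient member of \<open>\<F>\<close> by induction on \<open>|N S|\<close>.
  First enlarge \<open>S\<close> to a maximal stable set with the same neighbourhood; this keeps it deficient,
  and it stays in \<open>\<S>\<^sub>2\<close> because the balance condition on \<open>\<S>\<^sub>1\<close> and the positivity of \<open>c\<close>
  forbid a strictly larger deficient member of \<open>\<S>\<^sub>1\<close>. If the enlarged set splits into two parts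
  with disjoint neighbourhoods, the weights add up, so one part is deficient; since every vertex
  has a neighbour, that part's neighbourhood misses a neighbour of the other part and is strictly
  smaller, so the induction hypothesis applies.\<close>

abbreviation sq_weight :: "('a \<Rightarrow> real) \<Rightarrow> 'a set \<Rightarrow> real" where
  "sq_weight c X \<equiv> \<Sum>j\<in>X. (c j)^2"

abbreviation deficient :: "('a \<Rightarrow> real) \<Rightarrow> 'a set \<Rightarrow> 'a set set \<Rightarrow> 'a set \<Rightarrow> bool" where
  "deficient c V E S \<equiv> sq_weight c (nbhd V E S) \<le> sq_weight c S"

lemma sq_weight_psubset_less:
  assumes "finite Y" "X \<subset> Y" "\<forall>j\<in>Y. c j > 0"
  shows "sq_weight c X < sq_weight c Y"
proof -
  obtain b where b: "b \<in> Y - X" using assms(2) by blast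
  show ?thesis
  proof (rule sum_strict_mono2[OF assms(1) _ b])
    show "X \<subseteq> Y" using assms(2) by blast
    show "0 < (c b)^2" using b assms(3) by force
  qed simp
qed

lemma stable_subset: "stable V E T \<Longrightarrow> S \<subseteq> T \<Longrightarrow> stable V E S"
  unfolding stable_def by blast

lemma finite_nbhd: "finite V \<Longrightarrow> finite (nbhd V E S)"
  unfolding nbhd_def by simp

lemma nbhd_Un_stable:
  assumes "stable V E (A \<union> B)"
  shows "nbhd V E (A \<union> B) = nbhd V E A \<union> nbhd V E B"
  using assms unfolding nbhd_def stable_def by blast

lemma connected_graph_has_neighbour:
  assumes "connected_graph V E" "simple_graph V E" "{k, l} \<in> E" "v \<in> V"
  shows "\<exists>u. {v, u} \<in> E"
proof -
  have "k \<in> V" using assms(2,3) unfolding simple_graph_def by blast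
  then have "(v, k) \<in> (adj_rel E)\<^sup>*" using assms(1,4) unfolding connected_graph_def by blast
  then show ?thesis
  proof (cases rule: converse_rtranclE)
    case base
    then show ?thesis using assms(3) by blast
  next
    case (step y)
    then show ?thesis unfolding adj_rel_def by blast
  qed
qed

lemma stable_nbhd_maximal_extension:
  assumes "finite V" "stable V E S"
  obtains S' where "stable V E S'" "S \<subseteq> S'" "nbhd V E S' = nbhd V E S"
    "\<not> (\<exists>S''. stable V E S'' \<and> S' \<subset> S'' \<and> nbhd V E S'' = nbhd V E S')"
proof -
  let ?ext = "{X. stable V E X \<and> S \<subseteq> X \<and> nbhd V E X = nbhd V E S}"
  have "finite ?ext"
    by (rule finite_subset[of _ "Pow V"]) (auto simp: stable_def assms(1))
  moreover have "S \<in> ?ext" using assms(2) by blast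
  ultimately obtain S' where "S' \<in> ?ext" and maximal: "\<forall>X\<in>?ext. S' \<le> X \<longrightarrow> S' = X"
    using finite_has_maximal2[of ?ext S] by auto
  show ?thesis
  proof (rule that)
    show "stable V E S'" "S \<subseteq> S'" "nbhd V E S' = nbhd V E S"
      using \<open>S' \<in> ?ext\<close> by auto
    then show "\<not> (\<exists>S''. stable V E S'' \<and> S' \<subset> S'' \<and> nbhd V E S'' = nbhd V E S')"
      using maximal by blast
  qed
qed

lemma deficient_extension_in_S2:
  assumes pos: "\<forall>j\<in>V. c j > 0"
    and balanced: "\<forall>S\<in>S1 V E. sq_weight c S = sq_weight c (nbhd V E S)"
    and S: "S \<in> S2 V E" "deficient c V E S"
    and S': "finite S'" "stable V E S'" "S \<subseteq> S'" "nbhd V E S' = nbhd V E S"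
  shows "S' \<in> S2 V E"
proof (rule ccontr)
  assume "S' \<notin> S2 V E"
  then have "S' \<in> S1 V E" "S \<subset> S'"
    using S S' unfolding S1_def S2_def by blast+
  moreover have "\<forall>j\<in>S'. c j > 0" using pos S'(2) unfolding stable_def by blast
  ultimately have "sq_weight c S < sq_weight c S'"
    using S'(1) by (intro sq_weight_psubset_less)
  moreover have "sq_weight c S' = sq_weight c (nbhd V E S)"
    using balanced \<open>S' \<in> S1 V E\<close> S'(4) by simp
  ultimately show False using S(2) by linarith
qed

lemma deficient_Un_imp_deficient:
  assumes "finite V" "stable V E (A \<union> B)" "A \<inter> B = {}" "nbhd V E A \<inter> nbhd V E B = {}"
    and "deficient c V E (A \<union> B)"
  shows "deficient c V E A \<or> deficient c V E B"
proof -
  have fin: "finite A" "finite B"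
    using assms(1,2) finite_subset unfolding stable_def by blast+
  have "sq_weight c (nbhd V E (A \<union> B)) = sq_weight c (nbhd V E A) + sq_weight c (nbhd V E B)"
    using nbhd_Un_stable[OF assms(2)] assms(1,4) by (simp add: finite_nbhd sum.union_disjoint)
  moreover have "sq_weight c (A \<union> B) = sq_weight c A + sq_weight c B"
    using fin assms(3) by (simp add: sum.union_disjoint)
  ultimately show ?thesis using assms(5) by linarith
qed

lemma separated_part_in_S2_nbhd_psubset:
  assumes edges: "\<forall>e\<in>E. e \<subseteq> V" and nb: "\<forall>v\<in>V. \<exists>u. {v, u} \<in> E"
    and AB: "stable V E (A \<union> B)" "A \<noteq> {}" "B \<noteq> {}" "A \<inter> B = {}"
      "nbhd V E A \<inter> nbhd V E B = {}"
  shows "A \<in> S2 V E" "nbhd V E A \<subset> nbhd V E (A \<union> B)"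
proof -
  obtain y where y: "y \<in> B" using AB(3) by blast
  then obtain u where u: "{y, u} \<in> E" using nb AB(1) unfolding stable_def by blast
  have "u \<in> V" using u edges by blast
  moreover have "u \<notin> A \<union> B" using AB(1) u y unfolding stable_def by blast
  ultimately have "u \<in> nbhd V E B" using y u unfolding nbhd_def by (auto simp: insert_commute)
  then show "nbhd V E A \<subset> nbhd V E (A \<union> B)"
    using nbhd_Un_stable[OF AB(1)] AB(5) by blast
  have "y \<notin> A" using y AB(4) by blast
  then show "A \<in> S2 V E"
    using stable_subset[OF AB(1)] AB(2) u \<open>u \<notin> A \<union> B\<close> unfolding S2_def by blast
qed

lemma deficient_S2_imp_deficient_F_family:
  assumes fin: "finite V" and edges: "\<forall>e\<in>E. e \<subseteq> V" and nb: "\<forall>v\<in>V. \<exists>u. {v, u} \<in> E"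
    and pos: "\<forall>j\<in>V. c j > 0"
    and balanced: "\<forall>S\<in>S1 V E. sq_weight c S = sq_weight c (nbhd V E S)"
  shows "S \<in> S2 V E \<Longrightarrow> deficient c V E S
     \<Longrightarrow> \<exists>T\<in>F_family V E. deficient c V E T"
proof (induction "card (nbhd V E S)" arbitrary: S rule: less_induct)
  case less
  have "stable V E S" using less.prems(1) unfolding S2_def by blast
  then obtain S' where S': "stable V E S'" "S \<subseteq> S'" "nbhd V E S' = nbhd V E S"
    and maximal: "\<not> (\<exists>S''. stable V E S'' \<and> S' \<subset> S'' \<and> nbhd V E S'' = nbhd V E S')"
    using stable_nbhd_maximal_extension fin by blast
  have "finite S'" using S'(1) fin finite_subset unfolding stable_def by blast
  then have "S' \<in> S2 V E"
    using deficient_extension_in_S2[OF pos balanced less.prems] S' by blast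
  have "sq_weight c S \<le> sq_weight c S'"
    using \<open>finite S'\<close> S'(2) by (intro sum_mono2) auto
  then have "deficient c V E S'"
    using less.prems(2) S'(3) by simp
  show ?case
  proof (cases "\<exists>A B. A \<noteq> {} \<and> B \<noteq> {} \<and> A \<inter> B = {} \<and> A \<union> B = S'
                      \<and> nbhd V E A \<inter> nbhd V E B = {}")
    case False
    then have "S' \<in> F_family V E"
      using \<open>S' \<in> S2 V E\<close> maximal unfolding F_family_def by blast
    then show ?thesis using \<open>deficient c V E S'\<close> by blast
  next
    case True
    then obtain A B where AB: "A \<noteq> {}" "B \<noteq> {}" "A \<inter> B = {}" "A \<union> B = S'"
      "nbhd V E A \<inter> nbhd V E B = {}" by blast
    have descend: "\<exists>T\<in>F_family V E. deficient c V E T"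
      if "X \<noteq> {}" "Y \<noteq> {}" "X \<inter> Y = {}" "X \<union> Y = S'" "nbhd V E X \<inter> nbhd V E Y = {}"
        and "deficient c V E X" for X Y
    proof -
      have "X \<in> S2 V E" "nbhd V E X \<subset> nbhd V E S"
        using separated_part_in_S2_nbhd_psubset[OF edges nb, of X Y] that S'(1,3) by auto
      then show ?thesis
        using less.hyps[OF psubset_card_mono[OF finite_nbhd[OF fin]] _ that(6)] by blast
    qed
    have "deficient c V E A \<or> deficient c V E B"
      using deficient_Un_imp_deficient[OF fin, of E A B c] S'(1) AB \<open>deficient c V E S'\<close> by blast
    then show ?thesis
      using descend[of A B] descend[of B A] AB by (auto simp: Int_commute Un_commute)
  qed
qed

theorem mainTheorem2:
  fixes n :: nat and E :: "nat set set" and c :: "nat \<Rightarrow> real"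
  assumes "simple_graph {1..n} E"
    and "connected_graph {1..n} E"
    and "\<forall>j\<in>{1..n}. c j > 0"
    and "\<forall>S\<in>S1 {1..n} E. (\<Sum>j\<in>S. (c j)^2) = (\<Sum>j\<in>nbhd {1..n} E S. (c j)^2)"
  shows "(\<forall>S\<in>S2 {1..n} E. (\<Sum>j\<in>S. (c j)^2) < (\<Sum>j\<in>nbhd {1..n} E S. (c j)^2))
     \<longleftrightarrow> (\<forall>S\<in>F_family {1..n} E. (\<Sum>j\<in>S. (c j)^2) < (\<Sum>j\<in>nbhd {1..n} E S. (c j)^2))"
proof
  assume "\<forall>S\<in>S2 {1..n} E. (\<Sum>j\<in>S. (c j)^2) < (\<Sum>j\<in>nbhd {1..n} E S. (c j)^2)"
  then show "\<forall>S\<in>F_family {1..n} E. (\<Sum>j\<in>S. (c j)^2) < (\<Sum>j\<in>nbhd {1..n} E S. (c j)^2)"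
    unfolding F_family_def by blast
next
  assume F_strict: "\<forall>S\<in>F_family {1..n} E. (\<Sum>j\<in>S. (c j)^2) < (\<Sum>j\<in>nbhd {1..n} E S. (c j)^2)"
  show "\<forall>S\<in>S2 {1..n} E. (\<Sum>j\<in>S. (c j)^2) < (\<Sum>j\<in>nbhd {1..n} E S. (c j)^2)"
  proof (rule ccontr)
    assume "\<not> ?thesis"
    then obtain S where S: "S \<in> S2 {1..n} E" "deficient c {1..n} E S"
      by force
    obtain k l where "{k, l} \<in> E" using S(1) unfolding S2_def by blast
    then have "\<forall>v\<in>{1..n}. \<exists>u. {v, u} \<in> E"
      using connected_graph_has_neighbour[OF assms(2,1)] by blast
    moreover have "\<forall>e\<in>E. e \<subseteq> {1..n}" using assms(1) unfolding simple_graph_def by blast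
    ultimately obtain T where "T \<in> F_family {1..n} E"
      "deficient c {1..n} E T"
      using deficient_S2_imp_deficient_F_family[OF _ _ _ assms(3,4) S] by blast
    then show False using F_strict by fastforce
  qed
qed

end
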